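(* Let $F:\mathbb{R}^n\to\mathbb{R}^n$ be semilinear, monotone and homogeneous. Then there exists a game graph $\vec{\mathcal{G}}$ with Min vertex set $[n]$ satisfying assumptions (a)–(c) such that $F$ is the operator encoded by $\vec{\mathcal{G}}$.
   Context: Game graph: a directed graph $\vec{\mathcal{G}}=(V,E)$ with $V=V_{\mathrm{Min}}\uplus V_{\mathrm{Rand}}\uplus V_{\mathrm{Max}}$, $V_{\mathrm{Min}}=[n]$ and $V_{\mathrm{Max}}=[m]$ nonempty, every vertex having at least one outgoing edge; $\mathrm{Out}(v)$ is the set of outgoing edges of $v$. Each edge $e$ with Min or Max tail carries a real $r_e$; each edge $e$ with Random tail carries a rational $q_e>0$, summing to $1$ over the outgoing edges of each Random vertex. Assumptions: (a) every path between two Min vertices contains a Max vertex; (b) every path between two Max vertices contains a Min vertex; (c) from every Random vertex there is a path to a Min or Max vertex. In the Markov chain on $V$ where Min and Max vertices are absorbing and a Random vertex $v$ moves to $w$ with probability $q_{(v,w)}$, $p^e_v$ is the probability that the chain started at the head of edge $e$ is absorbed at $v\in V_{\mathrm{Min}}\cup V_{\mathrm{Max}}$. The operator encoded by $\vec{\mathcal{G}}$ is $F_v(x)=\min_{e\in\mathrm{Out}(v)}\big(r_e+\sum_{w\in[m]}p^e_w\max_{e'\in\mathrm{Out}(w)}(r_{e'}+\sum_{u\in[n]}p^{e'}_u x_u)\big)$, $v\in[n]$. Semilinear: graph of $F$ is a finite union of sets $\{z: \langle A_i,z\rangle>b_i,\ \langle A_j,z\rangle=b_j\}$ with rational $A$,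 real $b$. Monotone: $x\le y\Rightarrow F(x)\le F(y)$; homogeneous: $F(\lambda+x)=\lambda+F(x)$ for $\lambda\in\mathbb{R}$. *)

theory Defs
  imports "HOL-Analysis.Analysis"
begin

text \<open>A linear constraint on z = (x,y) in R^n x R^n: coefficient vectors a (for x) and
  c (for y), right-hand side b.\<close>

type_synonym 'n lin_constr = "(real^('n::finite)) \<times> (real^'n) \<times> real"

definition rational_constr :: "('n::finite) lin_constr \<Rightarrow> bool" where
  "rational_constr C \<longleftrightarrow> (case C of (a, c, b) \<Rightarrow> (\<forall>i. a $ i \<in> \<rat> \<and> c $ i \<in> \<rat>))"

definition basic_semilinear_set :: 
  "('n::finite) lin_constr set \<Rightarrow> 'n lin_constr set \<Rightarrow> ((real^'n) \<times> (real^'n)) set" where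
  "basic_semilinear_set S Q =
     {(x, y). (\<forall>(a, c, b)\<in>S. a \<bullet> x + c \<bullet> y > b) \<and> (\<forall>(a, c, b)\<in>Q. a \<bullet> x + c \<bullet> y = b)}"

definition semilinear_map :: "(real^('n::finite) \<Rightarrow> real^'n) \<Rightarrow> bool" where
  "semilinear_map F \<longleftrightarrow>
     (\<exists>P :: ('n lin_constr set \<times> 'n lin_constr set) set.
        finite P \<and>
        (\<forall>(S, Q)\<in>P. finite S \<and> finite Q \<and> (\<forall>C\<in>S \<union> Q. rational_constr C)) \<and>
        {(x, F x) | x. True} = (\<Union>(S, Q)\<in>P. basic_semilinear_set S Q))"

definition monotone_map :: "(real^('n::finite) \<Rightarrow> real^'n) \<Rightarrow> bool" where
  "monotone_map F \<longleftrightarrow> (\<forall>x y. (\<forall>i. x $ i \<le> y $ i) \<longrightarrow> (\<forall>i. F x $ i \<le> F y $ i))"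

definition homogeneous_map :: "(real^('n::finite) \<Rightarrow> real^'n) \<Rightarrow> bool" where
  "homogeneous_map F \<longleftrightarrow> (\<forall>(l::real) x. F ((\<chi> i. l) + x) = (\<chi> i. l) + F x)"

text \<open>Vertices: Min vertices are indexed by the finite type 'n (playing the role of [n]),
  Max vertices are MaxV j with j < m (i.e. [m]), Random vertices are RandV k, k in a finite set.\<close>

datatype 'n vertex = MinV 'n | MaxV nat | RandV nat

fun is_min :: "'n vertex \<Rightarrow> bool" where
  "is_min (MinV _) = True" | "is_min _ = False"
fun is_max :: "'n vertex \<Rightarrow> bool" where
  "is_max (MaxV _) = True" | "is_max _ = False"
fun is_rand :: "'n vertex \<Rightarrow> bool" where
  "is_rand (RandV _) = True" | "is_rand _ = False"

type_synonym 'n edge = "'n vertex \<times> 'n vertex"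

definition vertices :: "nat \<Rightarrow> nat set \<Rightarrow> 'n vertex set" where
  "vertices m R = range MinV \<union> MaxV ` {..<m} \<union> RandV ` R"

definition Out :: "'n edge set \<Rightarrow> 'n vertex \<Rightarrow> 'n edge set" where
  "Out E v = {e \<in> E. fst e = v}"

definition is_path :: "'n edge set \<Rightarrow> 'n vertex list \<Rightarrow> bool" where
  "is_path E xs \<longleftrightarrow> length xs \<ge> 2 \<and> (\<forall>i. Suc i < length xs \<longrightarrow> (xs ! i, xs ! Suc i) \<in> E)"

definition game_graph ::
  "nat \<Rightarrow> nat set \<Rightarrow> 'n edge set \<Rightarrow> ('n edge \<Rightarrow> real) \<Rightarrow> ('n edge \<Rightarrow> real) \<Rightarrow> bool" where
  "game_graph m R E r q \<longleftrightarrow>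
     m > 0 \<and> finite R \<and>
     E \<subseteq> vertices m R \<times> vertices m R \<and>
     (\<forall>v\<in>vertices m R. Out E v \<noteq> {}) \<and>
     (\<forall>e\<in>E. is_rand (fst e) \<longrightarrow> q e \<in> \<rat> \<and> q e > 0) \<and>
     (\<forall>v\<in>vertices m R. is_rand v \<longrightarrow> (\<Sum>e\<in>Out E v. q e) = 1) \<and>
     \<comment> \<open>(a)\<close>
     (\<forall>xs. is_path E xs \<and> is_min (hd xs) \<and> is_min (last xs) \<longrightarrow> (\<exists>w\<in>set xs. is_max w)) \<and>
     \<comment> \<open>(b)\<close>
     (\<forall>xs. is_path E xs \<and> is_max (hd xs) \<and> is_max (last xs) \<longrightarrow> (\<exists>w\<in>set xs. is_min w)) \<and>
     \<comment> \<open>(c)\<close>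
     (\<forall>v\<in>vertices m R. is_rand v \<longrightarrow>
        (\<exists>xs. is_path E xs \<and> hd xs = v \<and> (is_min (last xs) \<or> is_max (last xs))))"

text \<open>absorb_within E q k w v: probability that the Markov chain (Min and Max vertices
  absorbing, a Random vertex u moves to w with probability q (u,w)) started at w
  is absorbed at v within k steps.\<close>
fun absorb_within :: "'n edge set \<Rightarrow> ('n edge \<Rightarrow> real) \<Rightarrow> nat \<Rightarrow> 'n vertex \<Rightarrow> 'n vertex \<Rightarrow> real" where
  "absorb_within E q 0 w v = (if \<not> is_rand w \<and> w = v then 1 else 0)"
| "absorb_within E q (Suc k) w v =
     (if is_rand w then (\<Sum>e\<in>Out E w. q e * absorb_within E q k (snd e) v)
      else (if w = v then 1 else 0))"

text \<open>Absorption probability at v starting from w (limit of the nondecreasing sequence).\<close>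
definition absorb :: "'n edge set \<Rightarrow> ('n edge \<Rightarrow> real) \<Rightarrow> 'n vertex \<Rightarrow> 'n vertex \<Rightarrow> real" where
  "absorb E q w v = lim (\<lambda>k. absorb_within E q k w v)"

text \<open>p^e_v = absorb E q (snd e) v.  The operator encoded by the game graph.\<close>
definition encoded_operator ::
  "nat \<Rightarrow> ('n::finite) edge set \<Rightarrow> ('n edge \<Rightarrow> real) \<Rightarrow> ('n edge \<Rightarrow> real) \<Rightarrow> real^'n \<Rightarrow> real^'n" where
  "encoded_operator m E r q x = (\<chi> v.
     Min ((\<lambda>e. r e + (\<Sum>w<m. absorb E q (snd e) (MaxV w) *
              Max ((\<lambda>e'. r e' + (\<Sum>u\<in>UNIV. absorb E q (snd e') (MinV u) * x $ u))
                   ` Out E (MaxV w))))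
          ` Out E (MinV v)))"

end

theory Submission
  imports Defs
begin

text \<open>The graph of \<open>F\<close> is a finite union of relatively open polyhedral pieces. On a piece
  whose directions project onto all of \<open>\<real>\<^sup>n\<close>, \<open>F\<close> is affine, \<open>F x = c + W x\<close>: monotonicity makes
  \<open>W\<close> nonnegative, homogeneity makes its rows sum to \<open>1\<close>, and \<open>W\<close> is rational since it is the
  unique solution of a rational linear system (a \<open>\<rat>\<close>-linear retraction \<open>\<real> \<rightarrow> \<rat>\<close> maps solutions
  to solutions). The other pieces project into hyperplanes, so by continuity every coordinate
  \<open>F\<^sub>i\<close> is a continuous selection of finitely many affine maps with rational stochastic weights.
  Such a selection satisfies \<open>f x = min\<^sub>y max {g x | g y \<le> f y}\<close>, because on the segment from
  \<open>y\<close> to \<open>x\<close> some piece lies below \<open>f\<close> at \<open>y\<close> and above \<open>f\<close> at \<open>x\<close>. Finally, such a min-max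
  is the operator of a three-layer game \<open>Min \<rightarrow> Max \<rightarrow> Random \<rightarrow> Min\<close>.\<close>

section \<open>Continuous selections of affine maps as min-max\<close>

lemma closed_contains_left_endpoint:
  fixes a b :: real
  assumes "closed S" and "a < b" and "{a<..b} \<subseteq> S"
  shows "a \<in> S"
  using closure_minimal[OF assms(3,1)] assms(2) by auto

lemma line_below_after_crossing:
  fixes a b a0 b0 s t :: real
  assumes "a0 < a" and "a + b * s = a0 + b0 * s" and "0 \<le> s" and "s < t"
  shows "a + b * t < a0 + b0 * t"
proof -
  have "0 < (b0 - b) * s"
    using assms(1,2) by (simp add: algebra_simps)
  then have "0 < b0 - b"
    using assms(3) by (simp add: zero_less_mult_iff)
  then have "(b0 - b) * s < (b0 - b) * t"
    using assms(4) by simp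
  with assms(2) show ?thesis
    by (simp add: algebra_simps)
qed

lemma closed_bounded_has_max:
  fixes Z :: "real set"
  assumes "closed Z" and "Z \<subseteq> {a..b}" and "z \<in> Z"
  obtains m where "m \<in> Z" and "\<And>t. t \<in> Z \<Longrightarrow> t \<le> m"
proof
  have "bdd_above Z"
    using assms(2) by (rule bdd_above_mono[rotated]) simp
  then show "Sup Z \<in> Z"
    using assms by (intro closed_contains_Sup) auto
  show "t \<le> Sup Z" if "t \<in> Z" for t
    using \<open>bdd_above Z\<close> that by (rule cSup_upper[rotated])
qed

lemma continuous_nonvanishing_pos:
  fixes g :: "real \<Rightarrow> real"
  assumes "continuous_on {a..b} g" and "a \<le> b" and "0 \<le> g b" and "\<And>s. a \<le> s \<Longrightarrow> s \<le> b \<Longrightarrow> g s \<noteq> 0"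
  shows "0 < g a"
proof (rule ccontr)
  assume "\<not> 0 < g a"
  then obtain s where "a \<le> s" "s \<le> b" "g s = 0"
    using IVT'[of g a 0 b] assms(1-3) by auto
  with assms(4) show False by blast
qed

lemma piecewise_linear_crossing:
  fixes h :: "real \<Rightarrow> real" and L :: "(real \<times> real) set"
  assumes "finite L" and cont: "continuous_on UNIV h"
    and cover: "\<And>t. 0 \<le> t \<Longrightarrow> t \<le> 1 \<Longrightarrow> \<exists>(a, b)\<in>L. h t = a + b * t"
  shows "\<exists>(a, b)\<in>L. a \<le> h 0 \<and> h 1 \<le> a + b"
proof (rule ccontr)
  define line where "line l t = fst l + snd l * t" for l :: "real \<times> real" and t
  have closed_agree: "closed (\<Union>l\<in>M. {t. h t = line l t})" if "M \<subseteq> L" for M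
    using finite_subset[OF that \<open>finite L\<close>]
    by (intro closed_UN ballI closed_Collect_eq cont) (auto simp: line_def intro!: continuous_intros)
  define A where "A = {l\<in>L. fst l \<le> h 0}"
  assume "\<not> ?thesis"
  then have A_below_1: "line l 1 < h 1" if "l \<in> A" for l
    using that by (auto simp: A_def line_def not_le)
  define Z where "Z = {0..1} \<inter> (\<Union>l\<in>A. {t. h t = line l t})"
  have "closed Z"
    unfolding Z_def by (intro closed_Int closed_atLeastAtMost closed_agree) (auto simp: A_def)
  have "0 \<in> Z"
    using cover[of 0] by (fastforce simp: Z_def A_def line_def)
  obtain t1 where "t1 \<in> Z" and upper: "\<And>t. t \<in> Z \<Longrightarrow> t \<le> t1"
    using closed_bounded_has_max[OF \<open>closed Z\<close> _ \<open>0 \<in> Z\<close>, of 0 1] by (auto simp: Z_def)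
  then obtain l0 where "l0 \<in> A" and l0_t1: "h t1 = line l0 t1" and "0 \<le> t1" "t1 \<le> 1"
    by (auto simp: Z_def)
  moreover have "t1 \<noteq> 1"
    using A_below_1[OF \<open>l0 \<in> A\<close>] l0_t1 by auto
  ultimately have "t1 < 1" by simp
  have below: "line l t < h t" if "l \<in> A" and t: "t1 < t" "t \<le> 1" for l t
  proof -
    have no_contact: "h s - line l s \<noteq> 0" if "t \<le> s" "s \<le> 1" for s
    proof
      assume "h s - line l s = 0"
      with \<open>l \<in> A\<close> t that \<open>0 \<le> t1\<close> have "s \<in> Z"
        by (auto simp: Z_def)
      with upper[of s] t that show False by simp
    qed
    have "continuous_on {t..1} (\<lambda>s. h s - line l s)"
      using cont by (auto simp: line_def intro!: continuous_intros intro: continuous_on_subset)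
    moreover have "0 \<le> h 1 - line l 1"
      using A_below_1[OF \<open>l \<in> A\<close>] by simp
    ultimately have "0 < h t - line l t"
      using continuous_nonvanishing_pos[of t 1 "\<lambda>s. h s - line l s"] \<open>t \<le> 1\<close> no_contact by blast
    then show ?thesis by simp
  qed
  \<comment> \<open>Right of the last contact point \<open>t1\<close>, \<open>h\<close> is covered only by lines missing \<open>(t1, h t1)\<close>;
    by closedness one of them would have to pass through it.\<close>
  have crossing: "line l t1 \<noteq> h t1" if "l \<in> L" "h t = line l t" "t1 < t" "t \<le> 1" for l t
  proof
    assume at_t1: "line l t1 = h t1"
    have "l \<notin> A"
    proof
      assume "l \<in> A"
      with that \<open>0 \<le> t1\<close> have "t \<in> Z" by (auto simp: Z_def)
      with upper \<open>t1 < t\<close> show False by fastforce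
    qed
    with \<open>l \<in> L\<close> \<open>l0 \<in> A\<close> have "fst l0 < fst l"
      by (auto simp: A_def)
    then have "line l t < line l0 t"
      using line_below_after_crossing[of "fst l0" "fst l" "snd l" t1 "snd l0" t]
        at_t1 l0_t1 \<open>0 \<le> t1\<close> \<open>t1 < t\<close> by (simp add: line_def)
    with below[OF \<open>l0 \<in> A\<close> \<open>t1 < t\<close> \<open>t \<le> 1\<close>] that(2) show False by simp
  qed
  have "{t1<..1} \<subseteq> (\<Union>l\<in>{l\<in>L. line l t1 \<noteq> h t1}. {t. h t = line l t})"
  proof
    fix t assume "t \<in> {t1<..1}"
    moreover have "0 \<le> t" "t \<le> 1"
      using \<open>t \<in> {t1<..1}\<close> \<open>0 \<le> t1\<close> by auto
    then obtain a b where "(a, b) \<in> L" "h t = a + b * t"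
      using cover by blast
    ultimately show "t \<in> (\<Union>l\<in>{l\<in>L. line l t1 \<noteq> h t1}. {t. h t = line l t})"
      using crossing[of "(a, b)" t] by (auto simp: line_def)
  qed
  from closed_contains_left_endpoint[OF closed_agree \<open>t1 < 1\<close> this]
  show False by auto
qed

definition aff_eval :: "real \<times> (real^'n) \<Rightarrow> real^'n \<Rightarrow> real" where
  "aff_eval g x = fst g + snd g \<bullet> x"

definition lower_pieces ::
  "(real \<times> (real^'n)) set \<Rightarrow> (real^'n \<Rightarrow> real) \<Rightarrow> real^'n \<Rightarrow> (real \<times> (real^'n)) set" where
  "lower_pieces G f y = {g\<in>G. aff_eval g y \<le> f y}"

definition min_max :: "(real \<times> (real^'n)) set set \<Rightarrow> real^'n \<Rightarrow> real" where
  "min_max Ts x = Min ((\<lambda>T. Max ((\<lambda>g. aff_eval g x) ` T)) ` Ts)"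

lemma aff_eval_on_segment:
  "aff_eval g (y + t *\<^sub>R (x - y)) = aff_eval g y + (snd g \<bullet> (x - y)) * t"
  by (simp add: aff_eval_def inner_add_right)

lemma affine_piece_crossing:
  fixes f :: "real^'n \<Rightarrow> real"
  assumes "finite G" and cont: "continuous_on UNIV f" and cover: "\<And>z. \<exists>g\<in>G. f z = aff_eval g z"
  shows "\<exists>g\<in>G. aff_eval g y \<le> f y \<and> f x \<le> aff_eval g x"
proof -
  define h where "h t = f (y + t *\<^sub>R (x - y))" for t
  define L where "L = (\<lambda>g. (aff_eval g y, snd g \<bullet> (x - y))) ` G"
  have "continuous_on UNIV h"
    unfolding h_def by (intro continuous_on_compose2[OF cont] continuous_intros) auto
  moreover have "\<exists>(a, b)\<in>L. h t = a + b * t" for t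
    using cover[of "y + t *\<^sub>R (x - y)"] by (force simp: L_def h_def aff_eval_on_segment)
  ultimately obtain a b where "(a, b) \<in> L" "a \<le> h 0" "h 1 \<le> a + b"
    using piecewise_linear_crossing[of L h] \<open>finite G\<close> by (auto simp: L_def)
  then show ?thesis
    using aff_eval_on_segment[of _ y 1 x] by (force simp: L_def h_def)
qed

lemma lower_pieces_subset: "lower_pieces G f y \<subseteq> G"
  by (auto simp: lower_pieces_def)

lemma finite_range_lower_pieces: "finite G \<Longrightarrow> finite (range (lower_pieces G f))"
  by (rule finite_subset[of _ "Pow G"]) (auto simp: lower_pieces_def)

lemma lower_pieces_nonempty:
  assumes "\<And>z. \<exists>g\<in>G. f z = aff_eval g z"
  shows "lower_pieces G f y \<noteq> {}"
  using assms[of y] by (force simp: lower_pieces_def)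

lemma min_max_lower_pieces:
  fixes f :: "real^'n \<Rightarrow> real"
  assumes fin: "finite G" and cont: "continuous_on UNIV f" and cover: "\<And>z. \<exists>g\<in>G. f z = aff_eval g z"
  shows "f x = min_max (range (lower_pieces G f)) x"
proof -
  have fin_T: "finite (lower_pieces G f y)" for y
    using finite_subset[OF lower_pieces_subset fin] .
  have "f x \<le> Max ((\<lambda>g. aff_eval g x) ` lower_pieces G f y)" for y
  proof -
    obtain g where "g \<in> G" "aff_eval g y \<le> f y" "f x \<le> aff_eval g x"
      using affine_piece_crossing[OF fin cont cover] by blast
    then show ?thesis
      using fin_T by (intro Max.coboundedI[THEN order_trans[rotated]]) (auto simp: lower_pieces_def)
  qed
  then have "f x \<le> min_max (range (lower_pieces G f)) x"
    unfolding min_max_def using finite_range_lower_pieces[OF fin] by (subst Min_ge_iff) auto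
  moreover have "Max ((\<lambda>g. aff_eval g x) ` lower_pieces G f x) \<le> f x"
    using fin_T lower_pieces_nonempty[OF cover] by (subst Max_le_iff) (auto simp: lower_pieces_def)
  then have "min_max (range (lower_pieces G f)) x \<le> f x"
    unfolding min_max_def using finite_range_lower_pieces[OF fin] by (intro Min.coboundedI[THEN order_trans]) auto
  ultimately show ?thesis by simp
qed

section \<open>Game graphs of min-max operators\<close>

definition rational_stochastic :: "real^'n \<Rightarrow> bool" where
  "rational_stochastic p \<longleftrightarrow> (\<forall>j. 0 \<le> p $ j \<and> p $ j \<in> \<rat>) \<and> (\<Sum>j\<in>UNIV. p $ j) = 1"

definition min_max_operator :: "('n \<Rightarrow> (real \<times> (real^'n)) set set) \<Rightarrow> real^'n \<Rightarrow> real^'n" where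
  "min_max_operator Ts x = (\<chi> i. min_max (Ts i) x)"

lemma rational_stochastic_support:
  fixes p :: "real^'n"
  assumes "rational_stochastic p"
  shows "(\<Sum>j\<in>{j. 0 < p $ j}. p $ j * f j) = (\<Sum>j\<in>UNIV. p $ j * f j)"
  using assms by (intro sum.mono_neutral_left) (auto simp: rational_stochastic_def less_le)

lemma rational_stochastic_support_nonempty:
  assumes "rational_stochastic p"
  shows "\<exists>j. 0 < p $ j"
proof (rule ccontr)
  assume "\<not> ?thesis"
  then have "{j. 0 < p $ j} = {}" by auto
  with rational_stochastic_support[OF assms, of "\<lambda>_. 1"] assms show False
    by (simp add: rational_stochastic_def)
qed

lemma absorb_within_not_rand:
  "\<not> is_rand w \<Longrightarrow> absorb_within E q k w v = (if w = v then 1 else 0)"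
  by (cases k) auto

lemma absorb_not_rand: "\<not> is_rand w \<Longrightarrow> absorb E q w v = (if w = v then 1 else 0)"
  by (simp add: absorb_def absorb_within_not_rand)

lemma absorb_eventually_const:
  assumes "\<And>k. absorb_within E q (Suc k) w v = c"
  shows "absorb E q w v = c"
proof -
  have "(\<lambda>k. absorb_within E q (Suc k) w v) \<longlonglongrightarrow> c"
    using assms by simp
  then show ?thesis
    unfolding absorb_def by (rule limI[OF LIMSEQ_imp_Suc])
qed

lemma is_path_first_edge:
  assumes "is_path E xs"
  shows "hd xs = xs ! 0" and "(xs ! 0, xs ! 1) \<in> E" and "xs ! 1 \<in> set xs"
proof -
  have "Suc 0 < length xs"
    using assms by (simp add: is_path_def)
  then show "hd xs = xs ! 0" "xs ! 1 \<in> set xs"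
    by (cases xs; simp)+
  show "(xs ! 0, xs ! 1) \<in> E"
    using assms \<open>Suc 0 < length xs\<close> unfolding is_path_def by simp
qed

text \<open>The game realising a min-max of affine pieces: Min vertex \<open>i\<close> moves to a Max vertex
  indexing a pair \<open>(i, T)\<close> with \<open>T \<in> Ts i\<close>, Max chooses a Random vertex indexing a piece
  \<open>g \<in> T\<close>; that edge pays the constant term of \<open>g\<close>, and the Random vertex moves to Min vertex
  \<open>u\<close> with the coefficient of \<open>u\<close> in \<open>g\<close> as probability.\<close>

locale min_max_game =
  fixes Ts :: "'n::finite \<Rightarrow> (real \<times> (real^'n)) set set"
    and K :: nat and piece :: "nat \<Rightarrow> real \<times> (real^'n)"
    and m :: nat and branch :: "nat \<Rightarrow> 'n \<times> (real \<times> (real^'n)) set"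
  assumes Ts_nonempty: "Ts i \<noteq> {}"
    and branch_nonempty: "T \<in> Ts i \<Longrightarrow> T \<noteq> {}"
    and stochastic: "T \<in> Ts i \<Longrightarrow> g \<in> T \<Longrightarrow> rational_stochastic (snd g)"
    and bij_piece: "bij_betw piece {..<K} (\<Union>i. \<Union>(Ts i))"
    and bij_branch: "bij_betw branch {..<m} (Sigma UNIV Ts)"
begin

definition edges :: "'n edge set" where
  "edges = {(MinV i, MaxV w) | i w. w < m \<and> fst (branch w) = i}
      \<union> {(MaxV w, RandV k) | w k. w < m \<and> k < K \<and> piece k \<in> snd (branch w)}
      \<union> {(RandV k, MinV u) | k u. k < K \<and> 0 < snd (piece k) $ u}"

definition reward :: "'n edge \<Rightarrow> real" where
  "reward e = (case snd e of RandV k \<Rightarrow> fst (piece k) | _ \<Rightarrow> 0)"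

definition prob :: "'n edge \<Rightarrow> real" where
  "prob e = (case e of (RandV k, MinV u) \<Rightarrow> snd (piece k) $ u | _ \<Rightarrow> 0)"

lemma Out_MinV: "Out edges (MinV i) = (\<lambda>w. (MinV i, MaxV w)) ` {w. w < m \<and> fst (branch w) = i}"
  by (auto simp: Out_def edges_def)

lemma Out_MaxV:
  "w < m \<Longrightarrow> Out edges (MaxV w) = (\<lambda>k. (MaxV w, RandV k)) ` {k. k < K \<and> piece k \<in> snd (branch w)}"
  by (auto simp: Out_def edges_def)

lemma Out_RandV: "k < K \<Longrightarrow> Out edges (RandV k) = (\<lambda>u. (RandV k, MinV u)) ` {u. 0 < snd (piece k) $ u}"
  by (auto simp: Out_def edges_def)

lemma edge_cases:
  assumes "(a, b) \<in> edges"
  shows "(is_min a \<and> is_max b) \<or> (is_max a \<and> is_rand b) \<or> (is_rand a \<and> is_min b)"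
  using assms by (auto simp: edges_def)

lemma branch_mem: "w < m \<Longrightarrow> snd (branch w) \<in> Ts (fst (branch w))"
  using bij_betw_apply[OF bij_branch, of w] by (metis lessThan_iff mem_Sigma_iff prod.collapse)

lemma branch_surj: "T \<in> Ts i \<Longrightarrow> \<exists>w<m. branch w = (i, T)"
  using bij_branch by (force simp: bij_betw_def)

lemma piece_stochastic: "k < K \<Longrightarrow> rational_stochastic (snd (piece k))"
  using bij_piece by (auto simp: bij_betw_def intro: stochastic)

lemma piece_image_branch:
  assumes "w < m"
  shows "piece ` {k. k < K \<and> piece k \<in> snd (branch w)} = snd (branch w)"
proof -
  have "snd (branch w) \<subseteq> piece ` {..<K}"
    using bij_piece branch_mem[OF assms] by (auto simp: bij_betw_def)
  then show ?thesis by auto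
qed

lemma Out_nonempty: "v \<in> vertices m {..<K} \<Longrightarrow> Out edges v \<noteq> {}"
proof (cases v)
  case (MinV i)
  obtain T where "T \<in> Ts i" using Ts_nonempty by blast
  with branch_surj MinV show ?thesis by (force simp: Out_MinV)
next
  case (MaxV w)
  assume "v \<in> vertices m {..<K}"
  with MaxV have "w < m" by (auto simp: vertices_def)
  then have "snd (branch w) \<noteq> {}"
    using branch_mem branch_nonempty by blast
  with piece_image_branch[OF \<open>w < m\<close>] MaxV \<open>w < m\<close> show ?thesis by (auto simp: Out_MaxV)
next
  case (RandV k)
  assume "v \<in> vertices m {..<K}"
  with RandV have "k < K" by (auto simp: vertices_def)
  with RandV rational_stochastic_support_nonempty[OF piece_stochastic] show ?thesis
    by (auto simp: Out_RandV)
qed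

lemma sum_prob_Out: "k < K \<Longrightarrow> (\<Sum>e\<in>Out edges (RandV k). prob e * f (snd e)) = snd (piece k) \<bullet> (\<chi> u. f (MinV u))"
  by (simp add: Out_RandV sum.reindex inj_on_def prob_def inner_vec_def
      rational_stochastic_support[OF piece_stochastic])

lemma m_pos: "0 < m"
proof -
  obtain T where "T \<in> Ts undefined"
    using Ts_nonempty by blast
  then show ?thesis
    using branch_surj by fastforce
qed

lemma prob_rational_pos:
  assumes "e \<in> edges" and "is_rand (fst e)"
  shows "prob e \<in> \<rat>" and "0 < prob e"
proof -
  obtain k u where "e = (RandV k, MinV u)" "k < K" "0 < snd (piece k) $ u"
    using assms by (auto simp: edges_def)
  with piece_stochastic[of k] show "prob e \<in> \<rat>" "0 < prob e"
    by (simp_all add: prob_def rational_stochastic_def)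
qed

lemma sum_prob_RandV: "k < K \<Longrightarrow> (\<Sum>e\<in>Out edges (RandV k). prob e) = 1"
  using sum_prob_Out[of k "\<lambda>_. 1"] piece_stochastic[of k]
  by (simp add: inner_vec_def rational_stochastic_def)

lemma path_from_Min_visits_Max:
  assumes "is_path edges xs" and "is_min (hd xs)"
  shows "\<exists>w\<in>set xs. is_max w"
proof -
  have "is_min (xs ! 0)" "(xs ! 0, xs ! 1) \<in> edges" "xs ! 1 \<in> set xs"
    using assms is_path_first_edge[of edges xs] by auto
  then show ?thesis
    using edge_cases[of "xs ! 0" "xs ! 1"] by (cases "xs ! 0") auto
qed

lemma path_between_Max_visits_Min:
  assumes path: "is_path edges xs" and "is_max (hd xs)" and "is_max (last xs)"
  shows "\<exists>w\<in>set xs. is_min w"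
proof -
  have "is_max (xs ! 0)" "(xs ! 0, xs ! 1) \<in> edges"
    using assms is_path_first_edge[of edges xs] by auto
  then have rand: "is_rand (xs ! 1)"
    using edge_cases[of "xs ! 0" "xs ! 1"] by (cases "xs ! 0") auto
  have "length xs \<noteq> 2"
  proof
    assume "length xs = 2"
    then have "last xs = xs ! 1"
      by (subst last_conv_nth) auto
    with rand \<open>is_max (last xs)\<close> show False by (cases "xs ! 1") auto
  qed
  with path have "Suc 1 < length xs"
    by (simp add: is_path_def)
  with path have "(xs ! 1, xs ! 2) \<in> edges" "xs ! 2 \<in> set xs"
    unfolding is_path_def by (simp_all add: numeral_2_eq_2)
  with rand show ?thesis
    using edge_cases[of "xs ! 1" "xs ! 2"] by (cases "xs ! 1") auto
qed

lemma RandV_path_to_MinV: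
  assumes "k < K"
  obtains u where "is_path edges [RandV k, MinV u]"
proof -
  obtain u where "0 < snd (piece k) $ u"
    using rational_stochastic_support_nonempty[OF piece_stochastic[OF assms]] by blast
  with assms have "is_path edges [RandV k, MinV u]"
    by (simp add: is_path_def edges_def)
  then show thesis by (rule that)
qed

lemma game_graph: "game_graph m {..<K} edges reward prob"
  unfolding game_graph_def
proof (intro conjI ballI allI impI)
  show "edges \<subseteq> vertices m {..<K} \<times> vertices m {..<K}"
    by (auto simp: edges_def vertices_def)
  show "(\<Sum>e\<in>Out edges v. prob e) = 1" if "v \<in> vertices m {..<K}" "is_rand v" for v
    using that sum_prob_RandV by (auto simp: vertices_def)
  show "\<exists>xs. is_path edges xs \<and> hd xs = v \<and> (is_min (last xs) \<or> is_max (last xs))"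
    if v: "v \<in> vertices m {..<K}" "is_rand v" for v
  proof -
    obtain k where "v = RandV k" "k < K"
      using v by (auto simp: vertices_def)
    moreover obtain u where "is_path edges [RandV k, MinV u]"
      using RandV_path_to_MinV[OF \<open>k < K\<close>] .
    ultimately show ?thesis
      by (intro exI[of _ "[RandV k, MinV u]"]) simp
  qed
qed (use m_pos Out_nonempty prob_rational_pos path_from_Min_visits_Max path_between_Max_visits_Min in auto)

lemma absorb_RandV:
  assumes "k < K"
  shows "absorb edges prob (RandV k) (MinV u) = snd (piece k) $ u"
proof (rule absorb_eventually_const)
  fix j
  have "absorb_within edges prob (Suc j) (RandV k) (MinV u)
      = snd (piece k) \<bullet> (\<chi> u'. absorb_within edges prob j (MinV u') (MinV u))"
    using sum_prob_Out[OF assms, of "\<lambda>v. absorb_within edges prob j v (MinV u)"] by simp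
  also have "\<dots> = (\<Sum>u'\<in>UNIV. if u' = u then snd (piece k) $ u' else 0)"
    unfolding inner_vec_def by (intro sum.cong) (auto simp: absorb_within_not_rand)
  also have "\<dots> = snd (piece k) $ u"
    by simp
  finally show "absorb_within edges prob (Suc j) (RandV k) (MinV u) = snd (piece k) $ u" .
qed

definition max_value :: "real^'n \<Rightarrow> nat \<Rightarrow> real" where
  "max_value x w = Max ((\<lambda>e'. reward e' + (\<Sum>u\<in>UNIV. absorb edges prob (snd e') (MinV u) * x $ u))
      ` Out edges (MaxV w))"

lemma max_value_eq:
  assumes "w < m"
  shows "max_value x w = Max ((\<lambda>g. aff_eval g x) ` snd (branch w))"
proof -
  have "(\<lambda>e'. reward e' + (\<Sum>u\<in>UNIV. absorb edges prob (snd e') (MinV u) * x $ u)) ` Out edges (MaxV w)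
      = (\<lambda>g. aff_eval g x) ` piece ` {k. k < K \<and> piece k \<in> snd (branch w)}"
    by (auto simp: Out_MaxV[OF assms] image_image reward_def absorb_RandV aff_eval_def inner_vec_def)
  then show ?thesis
    by (simp add: max_value_def piece_image_branch[OF assms])
qed

lemma MinV_edge_value:
  assumes "w0 < m"
  shows "reward (MinV i, MaxV w0) + (\<Sum>w<m. absorb edges prob (MaxV w0) (MaxV w) * M w) = M w0"
proof -
  have "(\<Sum>w<m. absorb edges prob (MaxV w0) (MaxV w) * M w) = (\<Sum>w<m. if w0 = w then M w else 0)"
    by (intro sum.cong) (auto simp: absorb_not_rand)
  with assms show ?thesis by (simp add: reward_def)
qed

lemma snd_branch_image: "snd ` branch ` {w. w < m \<and> fst (branch w) = i} = Ts i"
proof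
  show "snd ` branch ` {w. w < m \<and> fst (branch w) = i} \<subseteq> Ts i"
    using branch_mem by auto
  show "Ts i \<subseteq> snd ` branch ` {w. w < m \<and> fst (branch w) = i}"
  proof
    fix T assume "T \<in> Ts i"
    then obtain w where "w < m" "branch w = (i, T)"
      using branch_surj by blast
    then show "T \<in> snd ` branch ` {w. w < m \<and> fst (branch w) = i}"
      by (auto intro!: image_eqI[of T snd "(i, T)"] image_eqI[of "(i, T)" branch w])
  qed
qed

lemma encoded_operator_eq: "encoded_operator m edges reward prob x = min_max_operator Ts x"
proof -
  have "(\<lambda>e. reward e + (\<Sum>w<m. absorb edges prob (snd e) (MaxV w) * max_value x w)) ` Out edges (MinV i)
      = (\<lambda>T. Max ((\<lambda>g. aff_eval g x) ` T)) ` Ts i" for i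
  proof -
    have "(\<lambda>e. reward e + (\<Sum>w<m. absorb edges prob (snd e) (MaxV w) * max_value x w)) ` Out edges (MinV i)
        = (\<lambda>w. Max ((\<lambda>g. aff_eval g x) ` snd (branch w))) ` {w. w < m \<and> fst (branch w) = i}"
      unfolding Out_MinV image_image by (intro image_cong refl) (simp add: MinV_edge_value max_value_eq)
    also have "\<dots> = (\<lambda>T. Max ((\<lambda>g. aff_eval g x) ` T)) ` (snd ` branch ` {w. w < m \<and> fst (branch w) = i})"
      by (simp add: image_image)
    finally show ?thesis
      by (simp only: snd_branch_image)
  qed
  then show ?thesis
    unfolding encoded_operator_def max_value_def[symmetric]
    by (simp add: min_max_operator_def min_max_def)
qed

end

lemma min_max_operator_encodable:
  fixes Ts :: "'n::finite \<Rightarrow> (real \<times> (real^'n)) set set"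
  assumes "\<And>i. finite (Ts i)" and "\<And>i. Ts i \<noteq> {}"
    and "\<And>i T. T \<in> Ts i \<Longrightarrow> finite T" and "\<And>i T. T \<in> Ts i \<Longrightarrow> T \<noteq> {}"
    and "\<And>i T g. T \<in> Ts i \<Longrightarrow> g \<in> T \<Longrightarrow> rational_stochastic (snd g)"
  shows "\<exists>m R E r q. game_graph m R E r q \<and> encoded_operator m E r q = min_max_operator Ts"
proof -
  have "finite (\<Union>i. \<Union>(Ts i))" "finite (Sigma UNIV Ts)"
    using assms(1,3) by auto
  then obtain piece branch where
    "bij_betw piece {..<card (\<Union>i. \<Union>(Ts i))} (\<Union>i. \<Union>(Ts i))"
    "bij_betw branch {..<card (Sigma UNIV Ts)} (Sigma UNIV Ts)"
    using ex_bij_betw_nat_finite by (metis lessThan_atLeast0)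
  then interpret min_max_game Ts "card (\<Union>i. \<Union>(Ts i))" piece "card (Sigma UNIV Ts)" branch
    using assms by unfold_locales
  have "encoded_operator (card (Sigma UNIV Ts)) edges reward prob = min_max_operator Ts"
    using encoded_operator_eq by (rule ext)
  with game_graph show ?thesis by blast
qed

section \<open>Affine pieces of a semilinear, monotone, homogeneous map\<close>

definition constr_directions :: "('n::finite) lin_constr set \<Rightarrow> ((real^'n) \<times> (real^'n)) set" where
  "constr_directions Q = {(u, w). \<forall>(a, c, b)\<in>Q. a \<bullet> u + c \<bullet> w = 0}"

lemma mem_constr_directions:
  "(u, w) \<in> constr_directions Q \<longleftrightarrow> (\<forall>a c b. (a, c, b) \<in> Q \<longrightarrow> a \<bullet> u + c \<bullet> w = 0)"
  by (auto simp: constr_directions_def)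

lemma mem_basic_semilinear_set:
  "(x, y) \<in> basic_semilinear_set S Q \<longleftrightarrow>
     (\<forall>a c b. (a, c, b) \<in> S \<longrightarrow> b < a \<bullet> x + c \<bullet> y) \<and> (\<forall>a c b. (a, c, b) \<in> Q \<longrightarrow> a \<bullet> x + c \<bullet> y = b)"
  by (auto simp: basic_semilinear_set_def)

lemma subspace_constr_directions: "subspace (constr_directions Q)"
  unfolding subspace_def
proof (intro conjI ballI allI)
  show "0 \<in> constr_directions Q"
    by (simp add: zero_prod_def mem_constr_directions)
  fix d d' :: "(real^'a) \<times> (real^'a)" and r :: real
  assume d: "d \<in> constr_directions Q" and d': "d' \<in> constr_directions Q"
  have "a \<bullet> fst d + c \<bullet> snd d = 0" "a \<bullet> fst d' + c \<bullet> snd d' = 0" if "(a, c, b) \<in> Q" for a c b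
    using d d' that by (auto simp: constr_directions_def)
  then show "d + d' \<in> constr_directions Q"
    by (cases d, cases d') (simp add: mem_constr_directions inner_add_right, smt (verit))
  from d show "r *\<^sub>R d \<in> constr_directions Q"
    by (cases d) (simp add: mem_constr_directions inner_scaleR_right flip: distrib_left)
qed

lemma constr_directions_diff:
  assumes "(x, y) \<in> basic_semilinear_set S Q" and "(x', y') \<in> basic_semilinear_set S Q"
  shows "(x - x', y - y') \<in> constr_directions Q"
proof -
  have "a \<bullet> x + c \<bullet> y = b" "a \<bullet> x' + c \<bullet> y' = b" if "(a, c, b) \<in> Q" for a c b
    using assms that by (simp_all add: mem_basic_semilinear_set)
  then show ?thesis
    by (simp add: mem_constr_directions inner_diff_right) (smt (verit))
qed

definition rat_scale :: "rat \<Rightarrow> real \<Rightarrow> real" where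
  "rat_scale r x = of_rat r * x"

lemma vector_space_rat_scale: "vector_space rat_scale"
  by unfold_locales (auto simp: rat_scale_def algebra_simps of_rat_add of_rat_mult)

lemma rational_retraction_exists:
  "\<exists>\<psi> :: real \<Rightarrow> real. Modules.additive \<psi> \<and> (\<forall>q\<in>\<rat>. \<forall>x. \<psi> (q * x) = q * \<psi> x) \<and>
      (\<forall>x. \<psi> x \<in> \<rat>) \<and> (\<forall>q\<in>\<rat>. \<psi> q = q)"
proof -
  interpret V: vector_space rat_scale by (rule vector_space_rat_scale)
  interpret P: vector_space_pair rat_scale rat_scale by unfold_locales
  have indep: "V.independent {1::real}"
    by (simp add: V.independent_insert)
  define \<psi> where "\<psi> = P.construct {1} (\<lambda>_. 1)"
  interpret L: Vector_Spaces.linear rat_scale rat_scale \<psi>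
    unfolding \<psi>_def by (rule P.linear_construct[OF indep])
  have \<psi>_1: "\<psi> 1 = 1"
    unfolding \<psi>_def by (rule P.construct_basis[OF indep]) simp
  have \<psi>_scale: "\<psi> (of_rat r * x) = of_rat r * \<psi> x" for r x
    using L.scale[of r x] by (simp add: rat_scale_def)
  have \<psi>_rat: "\<psi> x \<in> \<rat>" for x
  proof -
    have "\<psi> x \<in> V.span ((\<lambda>_. 1) ` {1::real})"
      unfolding \<psi>_def by (rule P.construct_in_span[OF indep])
    then show ?thesis by (auto simp: V.span_singleton rat_scale_def)
  qed
  have "Modules.additive \<psi>" by unfold_locales (rule L.add)
  moreover have "\<forall>q\<in>\<rat>. \<forall>x. \<psi> (q * x) = q * \<psi> x"
    by (auto elim!: Rats_cases simp: \<psi>_scale)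
  moreover have "\<forall>q\<in>\<rat>. \<psi> q = q"
    using \<psi>_scale[of _ 1] \<psi>_1 by (auto elim!: Rats_cases)
  ultimately show ?thesis using \<psi>_rat by blast
qed

lemma rational_unique_direction:
  fixes Q :: "('n::finite) lin_constr set" and u w :: "real^'n"
  assumes rat: "\<forall>C\<in>Q. rational_constr C" and dir: "(u, w) \<in> constr_directions Q"
    and u_rat: "\<And>j. u $ j \<in> \<rat>" and unique: "\<And>w'. (u, w') \<in> constr_directions Q \<Longrightarrow> w' = w"
  shows "w $ i \<in> \<rat>"
proof -
  obtain \<psi> :: "real \<Rightarrow> real" where add: "Modules.additive \<psi>" and mult: "\<forall>q\<in>\<rat>. \<forall>x. \<psi> (q * x) = q * \<psi> x"
    and \<psi>_rat: "\<forall>x. \<psi> x \<in> \<rat>" and \<psi>_id: "\<forall>q\<in>\<rat>. \<psi> q = q"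
    using rational_retraction_exists by blast
  define w' :: "real^'n" where "w' = (\<chi> l. \<psi> (w $ l))"
  have "a \<bullet> u + c \<bullet> w' = 0" if "(a, c, b) \<in> Q" for a c b
  proof -
    have "a $ j \<in> \<rat>" "c $ j \<in> \<rat>" for j
      using rat that by (auto simp: rational_constr_def)
    then have "\<psi> (a \<bullet> u + c \<bullet> w) = a \<bullet> u + c \<bullet> w'"
      using u_rat by (simp add: inner_vec_def w'_def additive.add[OF add] additive.sum[OF add]
          mult \<psi>_id Rats_mult)
    moreover have "a \<bullet> u + c \<bullet> w = 0"
      using dir that by (auto simp: constr_directions_def)
    ultimately show ?thesis
      using additive.zero[OF add] by simp
  qed
  then have "w' = w"
    by (intro unique) (auto simp: constr_directions_def)
  then show ?thesis
    using \<psi>_rat by (metis vec_lambda_beta w'_def)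
qed

lemma nonfull_piece_negligible:
  fixes Q :: "('n::finite) lin_constr set"
  assumes "\<not> (\<forall>u. \<exists>w. (u, w) \<in> constr_directions Q)"
  shows "negligible (fst ` basic_semilinear_set S Q)"
proof (cases "basic_semilinear_set S Q = {}")
  case False
  then obtain x0 y0 where base: "(x0, y0) \<in> basic_semilinear_set S Q" by auto
  define U where "U = fst ` constr_directions Q"
  have "subspace U"
    unfolding U_def
    by (rule linear_subspace_image[OF bounded_linear.linear[OF bounded_linear_fst] subspace_constr_directions])
  moreover have "U \<noteq> UNIV"
  proof
    assume "U = UNIV"
    have "\<exists>w. (u, w) \<in> constr_directions Q" for u
    proof -
      from \<open>U = UNIV\<close> obtain d where "d \<in> constr_directions Q" "u = fst d"
        unfolding U_def by (metis UNIV_I imageE)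
      then show ?thesis by (intro exI[of _ "snd d"]) simp
    qed
    with assms show False by blast
  qed
  moreover have "span U = U"
    using \<open>subspace U\<close> by (simp add: span_eq_iff)
  ultimately have "span U \<noteq> UNIV"
    by metis
  then have "dim U < DIM(real^'n)"
    using dim_eq_full[of U] dim_subset_UNIV[of U] by linarith
  then obtain v :: "real^'n" where "v \<noteq> 0" and v: "\<And>y. y \<in> span U \<Longrightarrow> orthogonal v y"
    using orthogonal_to_subspace_exists by metis
  have "v \<bullet> x = v \<bullet> x0" if "(x, y) \<in> basic_semilinear_set S Q" for x y
  proof -
    have "x - x0 \<in> U"
      using constr_directions_diff[OF that base] by (force simp: U_def)
    then have "v \<bullet> (x - x0) = 0"
      using v[OF span_base] by (simp add: orthogonal_def)
    then show ?thesis
      by (simp add: inner_diff_right)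
  qed
  then have "fst ` basic_semilinear_set S Q \<subseteq> {x. v \<bullet> x = v \<bullet> x0}"
    by force
  then show ?thesis
    using negligible_hyperplane[of v "v \<bullet> x0"] \<open>v \<noteq> 0\<close> negligible_subset by blast
qed simp

lemma graph_along_direction:
  fixes F :: "real^'n::finite \<Rightarrow> real^'n"
  assumes "finite S" and graph: "\<And>x y. (x, y) \<in> basic_semilinear_set S Q \<Longrightarrow> y = F x"
    and base: "(x0, y0) \<in> basic_semilinear_set S Q" and dir: "(u, w) \<in> constr_directions Q"
  shows "\<exists>\<epsilon>>0. \<forall>t. 0 < t \<and> t < \<epsilon> \<longrightarrow> F (x0 + t *\<^sub>R u) = y0 + t *\<^sub>R w"
proof -
  define strict where "strict =
    (\<Inter>s\<in>S. {t::real. snd (snd s) < fst s \<bullet> (x0 + t *\<^sub>R u) + fst (snd s) \<bullet> (y0 + t *\<^sub>R w)})"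
  have "open strict"
    unfolding strict_def
    by (intro open_INT \<open>finite S\<close> ballI open_Collect_less continuous_intros)
  moreover have "0 \<in> strict"
    using base by (auto simp: strict_def mem_basic_semilinear_set)
  ultimately obtain \<epsilon> where "\<epsilon> > 0" and \<epsilon>: "\<And>t. dist t 0 < \<epsilon> \<Longrightarrow> t \<in> strict"
    unfolding open_dist by blast
  have on_piece: "(x0 + t *\<^sub>R u, y0 + t *\<^sub>R w) \<in> basic_semilinear_set S Q" if t: "0 < t" "t < \<epsilon>" for t
  proof -
    have "t \<in> strict"
      using \<epsilon> t by simp
    then have strict_S: "\<forall>s\<in>S. snd (snd s) < fst s \<bullet> (x0 + t *\<^sub>R u) + fst (snd s) \<bullet> (y0 + t *\<^sub>R w)"
      by (simp add: strict_def)
    have "b < a \<bullet> (x0 + t *\<^sub>R u) + c \<bullet> (y0 + t *\<^sub>R w)" if "(a, c, b) \<in> S" for a c b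
      using bspec[OF strict_S that] by simp
    moreover have "a \<bullet> (x0 + t *\<^sub>R u) + c \<bullet> (y0 + t *\<^sub>R w) = b" if "(a, c, b) \<in> Q" for a c b
    proof -
      have "a \<bullet> x0 + c \<bullet> y0 = b" "a \<bullet> u + c \<bullet> w = 0"
        using base dir that by (auto simp: mem_basic_semilinear_set mem_constr_directions)
      then have "a \<bullet> x0 + c \<bullet> y0 = b" "t * (a \<bullet> u) + t * (c \<bullet> w) = 0"
        by (simp_all flip: distrib_left)
      then show ?thesis
        by (simp add: inner_add_right inner_scaleR_right)
    qed
    ultimately show ?thesis
      by (simp add: mem_basic_semilinear_set)
  qed
  have "F (x0 + t *\<^sub>R u) = y0 + t *\<^sub>R w" if "0 < t" "t < \<epsilon>" for t
    using graph[OF on_piece[OF that]] by simp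
  with \<open>\<epsilon> > 0\<close> show ?thesis by blast
qed

lemma direction_unique:
  fixes F :: "real^'n::finite \<Rightarrow> real^'n"
  assumes "finite S" and "\<And>x y. (x, y) \<in> basic_semilinear_set S Q \<Longrightarrow> y = F x"
    and "(x0, y0) \<in> basic_semilinear_set S Q"
    and "(u, w) \<in> constr_directions Q" and "(u, w') \<in> constr_directions Q"
  shows "w = w'"
proof -
  obtain \<epsilon> \<epsilon>' where "\<epsilon> > 0" "\<epsilon>' > 0"
    and eq: "\<And>t. 0 < t \<and> t < \<epsilon> \<Longrightarrow> F (x0 + t *\<^sub>R u) = y0 + t *\<^sub>R w"
    and eq': "\<And>t. 0 < t \<and> t < \<epsilon>' \<Longrightarrow> F (x0 + t *\<^sub>R u) = y0 + t *\<^sub>R w'"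
    using graph_along_direction[of S Q F x0 y0 u w] graph_along_direction[of S Q F x0 y0 u w'] assms
    by blast
  moreover define t where "t = min \<epsilon> \<epsilon>' / 2"
  ultimately have "0 < t" "t < \<epsilon>" "t < \<epsilon>'"
    by auto
  with eq[of t] eq'[of t] have "y0 + t *\<^sub>R w = y0 + t *\<^sub>R w'"
    by simp
  with \<open>0 < t\<close> show ?thesis by simp
qed

lemma monotone_homogeneous_le_norm:
  fixes F :: "real^'n::finite \<Rightarrow> real^'n"
  assumes mono: "monotone_map F" and hom: "homogeneous_map F"
  shows "F x $ i \<le> F y $ i + norm (x - y)"
proof -
  have "x $ j \<le> ((\<chi> k. norm (x - y)) + y) $ j" for j
    using component_le_norm_cart[of "x - y" j] by simp
  then have "F x $ i \<le> F ((\<chi> k. norm (x - y)) + y) $ i"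
    using mono by (simp add: monotone_map_def)
  also have "\<dots> = norm (x - y) + F y $ i"
    using hom by (simp add: homogeneous_map_def)
  finally show ?thesis by simp
qed

lemma monotone_homogeneous_continuous:
  fixes F :: "real^'n::finite \<Rightarrow> real^'n"
  assumes "monotone_map F" and "homogeneous_map F"
  shows "continuous_on UNIV (\<lambda>x. F x $ i)"
proof (rule lipschitz_on_continuous_on)
  show "1-lipschitz_on UNIV (\<lambda>x. F x $ i)"
  proof (rule lipschitz_onI)
    fix x y :: "real^'n"
    show "dist (F x $ i) (F y $ i) \<le> 1 * dist x y"
      using monotone_homogeneous_le_norm[OF assms, of x i y] monotone_homogeneous_le_norm[OF assms, of y i x]
      by (simp add: dist_real_def dist_norm norm_minus_commute abs_le_iff)
  qed simp
qed

locale full_piece =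
  fixes F :: "real^'n::finite \<Rightarrow> real^'n" and S Q :: "'n lin_constr set" and x0 y0 :: "real^'n"
  assumes finite_S: "finite S"
    and graph: "\<And>x y. (x, y) \<in> basic_semilinear_set S Q \<Longrightarrow> y = F x"
    and base: "(x0, y0) \<in> basic_semilinear_set S Q"
    and full: "\<And>u. \<exists>w. (u, w) \<in> constr_directions Q"
begin

definition slope :: "real^'n \<Rightarrow> real^'n" where
  "slope u = (SOME w. (u, w) \<in> constr_directions Q)"

definition coeffs :: "'n \<Rightarrow> real^'n" where
  "coeffs i = (\<chi> j. slope (axis j 1) $ i)"

lemma slope_direction: "(u, slope u) \<in> constr_directions Q"
  unfolding slope_def using full by (rule someI_ex)

lemma slope_unique: "(u, w) \<in> constr_directions Q \<Longrightarrow> w = slope u"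
  using direction_unique[of S Q F x0 y0 u w "slope u"] finite_S graph base slope_direction by blast

lemma graph_along_slope: "\<exists>\<epsilon>>0. \<forall>t. 0 < t \<and> t < \<epsilon> \<longrightarrow> F (x0 + t *\<^sub>R u) = y0 + t *\<^sub>R slope u"
  using graph_along_direction[of S Q F x0 y0 u "slope u"] finite_S graph base slope_direction by blast

lemma slope_component: "slope u $ i = coeffs i \<bullet> u"
proof -
  have "(\<Sum>j\<in>UNIV. u $ j *\<^sub>R (axis j 1, slope (axis j 1))) \<in> constr_directions Q"
    by (intro subspace_sum subspace_constr_directions subspace_scale slope_direction)
  moreover have "(\<Sum>j\<in>UNIV. u $ j *\<^sub>R axis j (1::real)) = u"
    using basis_expansion[of u] by (simp add: scalar_mult_eq_scaleR)
  then have "(\<Sum>j\<in>UNIV. u $ j *\<^sub>R (axis j 1, slope (axis j 1)))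
      = (u, \<Sum>j\<in>UNIV. u $ j *\<^sub>R slope (axis j 1))"
    by (simp add: prod_eq_iff fst_sum snd_sum)
  ultimately have "(u, \<Sum>j\<in>UNIV. u $ j *\<^sub>R slope (axis j 1)) \<in> constr_directions Q"
    by simp
  then have "slope u = (\<Sum>j\<in>UNIV. u $ j *\<^sub>R slope (axis j 1))"
    by (rule slope_unique[symmetric])
  then show ?thesis
    by (simp add: coeffs_def inner_vec_def sum_component mult.commute)
qed

lemma affine_on_piece:
  assumes "(x, y) \<in> basic_semilinear_set S Q"
  shows "F x $ i = aff_eval (y0 $ i - coeffs i \<bullet> x0, coeffs i) x"
proof -
  have "y - y0 = slope (x - x0)"
    using constr_directions_diff[OF assms base] by (rule slope_unique)
  then have "y $ i - y0 $ i = coeffs i \<bullet> (x - x0)"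
    by (metis slope_component vector_minus_component)
  then show ?thesis
    using graph[OF assms] by (simp add: aff_eval_def inner_diff_right)
qed

lemma coeffs_nonneg:
  assumes "monotone_map F"
  shows "0 \<le> coeffs i $ j"
proof -
  obtain \<epsilon> where "\<epsilon> > 0" and \<epsilon>: "\<And>t. 0 < t \<and> t < \<epsilon> \<Longrightarrow> F (x0 + t *\<^sub>R axis j 1) = y0 + t *\<^sub>R slope (axis j 1)"
    using graph_along_slope by blast
  define t where "t = \<epsilon> / 2"
  have t: "0 < t" "t < \<epsilon>"
    using \<open>\<epsilon> > 0\<close> by (simp_all add: t_def)
  have "\<forall>k. x0 $ k \<le> (x0 + t *\<^sub>R axis j 1) $ k"
    using t by (simp add: axis_def)
  then have "F x0 $ i \<le> F (x0 + t *\<^sub>R axis j 1) $ i"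
    using assms by (simp add: monotone_map_def)
  also have "\<dots> = y0 $ i + t * coeffs i $ j"
    using \<epsilon>[of t] t by (simp add: coeffs_def)
  finally have "0 \<le> t * coeffs i $ j"
    using graph[OF base] by simp
  with t show ?thesis
    by (simp add: zero_le_mult_iff)
qed

lemma coeffs_sum:
  assumes "homogeneous_map F"
  shows "(\<Sum>j\<in>UNIV. coeffs i $ j) = 1"
proof -
  define one :: "real^'n" where "one = (\<chi> j. 1)"
  obtain \<epsilon> where "\<epsilon> > 0" and \<epsilon>: "\<And>t. 0 < t \<and> t < \<epsilon> \<Longrightarrow> F (x0 + t *\<^sub>R one) = y0 + t *\<^sub>R slope one"
    using graph_along_slope by blast
  define t where "t = \<epsilon> / 2"
  have t: "0 < t" "t < \<epsilon>"
    using \<open>\<epsilon> > 0\<close> by (simp_all add: t_def)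
  have "x0 + t *\<^sub>R one = (\<chi> i. t) + x0"
    by (simp add: vec_eq_iff one_def)
  then have "F (x0 + t *\<^sub>R one) = (\<chi> i. t) + F x0"
    using assms unfolding homogeneous_map_def by (simp only:)
  then have "t + y0 $ i = y0 $ i + t * slope one $ i"
    using \<epsilon>[of t] t graph[OF base] by (simp add: vec_eq_iff)
  then have "slope one $ i = 1"
    using t by simp
  then show ?thesis
    by (simp add: slope_component inner_vec_def one_def)
qed

lemma coeffs_rational:
  assumes "\<forall>C\<in>Q. rational_constr C"
  shows "coeffs i $ j \<in> \<rat>"
proof -
  have "axis j 1 $ k \<in> \<rat>" for k
    by (simp add: axis_def)
  from rational_unique_direction[OF assms slope_direction this slope_unique]
  show ?thesis by (simp add: coeffs_def)
qed

end

lemma full_piece_affine: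
  fixes F :: "real^'n::finite \<Rightarrow> real^'n"
  assumes "finite S" and "\<And>x y. (x, y) \<in> basic_semilinear_set S Q \<Longrightarrow> y = F x"
    and "basic_semilinear_set S Q \<noteq> {}" and "\<And>u. \<exists>w. (u, w) \<in> constr_directions Q"
    and "\<forall>C\<in>Q. rational_constr C" and "monotone_map F" and "homogeneous_map F"
  shows "\<exists>g. (\<forall>i. rational_stochastic (snd (g i))) \<and>
    (\<forall>x y. (x, y) \<in> basic_semilinear_set S Q \<longrightarrow> (\<forall>i. F x $ i = aff_eval (g i) x))"
proof -
  obtain x0 y0 where "(x0, y0) \<in> basic_semilinear_set S Q"
    using assms(3) by auto
  with assms interpret full_piece F S Q x0 y0
    by unfold_locales
  have "rational_stochastic (coeffs i)" for i
    using coeffs_nonneg[OF assms(6)] coeffs_sum[OF assms(7)] coeffs_rational[OF assms(5)]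
    by (simp add: rational_stochastic_def)
  with affine_on_piece show ?thesis
    by (intro exI[of _ "\<lambda>i. (y0 $ i - coeffs i \<bullet> x0, coeffs i)"]) simp
qed

lemma closed_conegligible_eq_UNIV:
  fixes C :: "'a::euclidean_space set"
  assumes "closed C" and "negligible N" and "- N \<subseteq> C"
  shows "C = UNIV"
proof (rule ccontr)
  assume "C \<noteq> UNIV"
  then have "\<not> negligible (- C)"
    using \<open>closed C\<close> by (intro open_not_negligible) auto
  moreover have "- C \<subseteq> N"
    using \<open>- N \<subseteq> C\<close> by blast
  ultimately show False
    using \<open>negligible N\<close> negligible_subset by blast
qed

lemma affine_cover_off_negligible:
  fixes F :: "real^'n::finite \<Rightarrow> real^'n" and G :: "('n \<Rightarrow> real \<times> (real^'n)) set"
  assumes "finite G" and cont: "\<And>i. continuous_on UNIV (\<lambda>x. F x $ i)" and "negligible N"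
    and cover: "\<And>x. x \<notin> N \<Longrightarrow> \<exists>g\<in>G. \<forall>i. F x $ i = aff_eval (g i) x"
  shows "\<exists>g\<in>G. \<forall>i. F x $ i = aff_eval (g i) x"
proof -
  define C where "C = (\<Union>g\<in>G. {x. \<forall>i. F x $ i = aff_eval (g i) x})"
  have "closed {x. F x $ i = aff_eval (g i) x}" for g i
    unfolding aff_eval_def by (intro closed_Collect_eq cont continuous_intros)
  then have "closed {x. \<forall>i. F x $ i = aff_eval (g i) x}" for g
    by (rule closed_Collect_all)
  then have "closed C"
    unfolding C_def using \<open>finite G\<close> by (intro closed_UN) auto
  moreover have "- N \<subseteq> C"
    using cover unfolding C_def by blast
  ultimately have "C = UNIV"
    using closed_conegligible_eq_UNIV \<open>negligible N\<close> by blast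
  then show ?thesis
    unfolding C_def by blast
qed

lemma semilinear_affine_pieces:
  fixes F :: "real^'n::finite \<Rightarrow> real^'n"
  assumes "semilinear_map F" and mono: "monotone_map F" and hom: "homogeneous_map F"
  shows "\<exists>G :: ('n \<Rightarrow> real \<times> (real^'n)) set. finite G \<and> (\<forall>g\<in>G. \<forall>i. rational_stochastic (snd (g i))) \<and>
    (\<forall>x. \<exists>g\<in>G. \<forall>i. F x $ i = aff_eval (g i) x)"
proof -
  obtain P :: "('n lin_constr set \<times> 'n lin_constr set) set" where "finite P"
    and P: "\<forall>(S, Q)\<in>P. finite S \<and> finite Q \<and> (\<forall>C\<in>S \<union> Q. rational_constr C)"
    and graph_eq: "{(x, F x) | x. True} = (\<Union>(S, Q)\<in>P. basic_semilinear_set S Q)"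
    using assms(1) unfolding semilinear_map_def by blast
  have graph: "y = F x" if "(S, Q) \<in> P" "(x, y) \<in> basic_semilinear_set S Q" for S Q x y
  proof -
    have "(x, y) \<in> {(x, F x) | x. True}"
      using graph_eq that by blast
    then show ?thesis by auto
  qed
  define full where "full S Q \<longleftrightarrow> basic_semilinear_set S Q \<noteq> {} \<and>
    (\<forall>u. \<exists>w. (u, w) \<in> constr_directions Q)" for S Q :: "'n lin_constr set"
  define affine_on where "affine_on S Q g \<longleftrightarrow> (\<forall>i. rational_stochastic (snd (g i))) \<and>
    (\<forall>x y. (x, y) \<in> basic_semilinear_set S Q \<longrightarrow> (\<forall>i. F x $ i = aff_eval (g i) x))"
    for S Q :: "'n lin_constr set" and g :: "'n \<Rightarrow> real \<times> (real^'n)"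
  have "\<exists>g. affine_on S Q g" if SQ: "(S, Q) \<in> P" "full S Q" for S Q
  proof -
    have "finite S" "\<forall>C\<in>Q. rational_constr C"
      using P SQ(1) by auto
    with SQ(2) graph[OF SQ(1)] show ?thesis
      unfolding affine_on_def full_def by (intro full_piece_affine mono hom) auto
  qed
  then have "\<forall>SQ\<in>{(S, Q)\<in>P. full S Q}. \<exists>g. affine_on (fst SQ) (snd SQ) g"
    by auto
  from bchoice[OF this] obtain piece
    where "\<forall>SQ\<in>{(S, Q)\<in>P. full S Q}. affine_on (fst SQ) (snd SQ) (piece SQ)"
    by blast
  then have piece: "affine_on S Q (piece (S, Q))" if "(S, Q) \<in> P" "full S Q" for S Q
    using that by auto
  define G where "G = piece ` {(S, Q)\<in>P. full S Q}"
  define N where "N = (\<Union>(S, Q)\<in>{(S, Q)\<in>P. \<not> full S Q}. fst ` basic_semilinear_set S Q)"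
  have finite_sub: "finite {(S, Q)\<in>P. R S Q}" for R
    by (rule finite_subset[OF _ \<open>finite P\<close>]) auto
  have "negligible (fst ` basic_semilinear_set S Q)" if "\<not> full S Q" for S Q
    using that nonfull_piece_negligible[of Q S] unfolding full_def by auto
  then have "negligible N"
    unfolding N_def using finite_sub by (intro negligible_Union) auto
  have off_N: "\<exists>g\<in>G. \<forall>i. F x $ i = aff_eval (g i) x" if "x \<notin> N" for x
  proof -
    have "(x, F x) \<in> (\<Union>(S, Q)\<in>P. basic_semilinear_set S Q)"
      using graph_eq by blast
    then obtain S Q where SQ: "(S, Q) \<in> P" "(x, F x) \<in> basic_semilinear_set S Q"
      by blast
    have "full S Q"
    proof (rule ccontr)
      assume "\<not> full S Q"
      moreover have "x \<in> fst ` basic_semilinear_set S Q"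
        using SQ(2) by (rule image_eqI[rotated]) simp
      ultimately have "x \<in> N"
        unfolding N_def using SQ(1) by (intro UN_I[of "(S, Q)"]) auto
      with \<open>x \<notin> N\<close> show False by simp
    qed
    have "\<forall>i. F x $ i = aff_eval (piece (S, Q) i) x"
      using piece[OF SQ(1) \<open>full S Q\<close>] SQ(2) unfolding affine_on_def by blast
    moreover have "piece (S, Q) \<in> G"
      using SQ(1) \<open>full S Q\<close> unfolding G_def by auto
    ultimately show ?thesis by blast
  qed
  have "rational_stochastic (snd (g i))" if "g \<in> G" for g i
  proof -
    from that obtain S Q where "(S, Q) \<in> P" "full S Q" "g = piece (S, Q)"
      unfolding G_def by auto
    with piece show ?thesis
      unfolding affine_on_def by blast
  qed
  moreover have "finite G"
    unfolding G_def using finite_sub by simp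
  moreover note affine_cover_off_negligible[OF this monotone_homogeneous_continuous[OF mono hom]
      \<open>negligible N\<close> off_N]
  ultimately show ?thesis
    by blast
qed

lemma continuous_affine_selection_encodable:
  fixes F :: "real^'n::finite \<Rightarrow> real^'n" and G :: "('n \<Rightarrow> real \<times> (real^'n)) set"
  assumes "finite G" and cont: "\<And>i. continuous_on UNIV (\<lambda>x. F x $ i)"
    and stochastic: "\<forall>g\<in>G. \<forall>i. rational_stochastic (snd (g i))"
    and cover: "\<forall>x. \<exists>g\<in>G. \<forall>i. F x $ i = aff_eval (g i) x"
  shows "\<exists>m R E r q. game_graph m R E r q \<and> encoded_operator m E r q = F"
proof -
  define rows where "rows i = (\<lambda>g. g i) ` G" for i
  define Ts where "Ts i = range (lower_pieces (rows i) (\<lambda>x. F x $ i))" for i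
  have rows_finite: "finite (rows i)" for i
    using \<open>finite G\<close> by (simp add: rows_def)
  have rows_cover: "\<exists>h\<in>rows i. F z $ i = aff_eval h z" for i z
    using cover by (auto simp: rows_def)
  have "F x $ i = min_max (Ts i) x" for x i
    unfolding Ts_def by (rule min_max_lower_pieces[OF rows_finite cont rows_cover])
  then have "F = min_max_operator Ts"
    by (simp add: min_max_operator_def vec_eq_iff fun_eq_iff)
  moreover have "\<exists>m R E r q. game_graph m R E r q \<and> encoded_operator m E r q = min_max_operator Ts"
  proof (rule min_max_operator_encodable)
    fix i T g
    show "finite (Ts i)" "Ts i \<noteq> {}"
      unfolding Ts_def using finite_range_lower_pieces[OF rows_finite] by auto
    assume "T \<in> Ts i"
    then obtain y where T: "T = lower_pieces (rows i) (\<lambda>x. F x $ i) y"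
      unfolding Ts_def by blast
    show "finite T" "T \<noteq> {}"
      unfolding T using finite_subset[OF lower_pieces_subset rows_finite] lower_pieces_nonempty[OF rows_cover]
      by auto
    show "rational_stochastic (snd g)" if "g \<in> T"
      using that lower_pieces_subset stochastic unfolding T rows_def by blast
  qed
  ultimately show ?thesis
    by simp
qed

theorem mainTheorem12:
  fixes F :: "real^'n \<Rightarrow> real^'n"
  assumes "semilinear_map F" and "monotone_map F" and "homogeneous_map F"
  shows "\<exists>m R E r q. game_graph m R E r q \<and> (\<forall>x. F x = encoded_operator m E r q x)"
proof -
  obtain G :: "('n \<Rightarrow> real \<times> (real^'n)) set" where "finite G"
    and "\<forall>g\<in>G. \<forall>i. rational_stochastic (snd (g i))"
    and "\<forall>x. \<exists>g\<in>G. \<forall>i. F x $ i = aff_eval (g i) x"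
    using semilinear_affine_pieces[OF assms] by blast
  with monotone_homogeneous_continuous[OF assms(2,3)]
  obtain m R E r q where "game_graph m R E r q" and "encoded_operator m E r q = F"
    using continuous_affine_selection_encodable by blast
  then show ?thesis
    by (intro exI[of _ m] exI[of _ R] exI[of _ E] exI[of _ r] exI[of _ q]) simp
qed

end
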